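(* Let $W$ be a complex vector space and $\phi(x,z)$ an associate of the additive formal group with $\phi(x,z)\ne x$. Then every compatible subset of $\mathcal{E}(W)$ is $\phi$-quasi compatible, and every quasi compatible subset of $\mathcal{E}(W)$ is $\phi$-quasi compatible.
   Context: $\mathcal{E}(W)=\mathrm{Hom}(W,W((x)))$. An associate is $\phi(x,z)\in\mathbb{C}((x))[[z]]$ with $\phi(x,0)=x$ and $\phi(\phi(x,x_2),x_0)=\phi(x,x_0+x_2)$; for $p\in\mathbb{C}[[x,y]]$, $p(\phi(x,z),x)\in\mathbb{C}((x))[[z]]$ is the substitution. A finite sequence $a_1(x),\dots,a_r(x)$ in $\mathcal{E}(W)$ is compatible if $\prod_{i<j}(x_i-x_j)^ka_1(x_1)\cdots a_r(x_r)\in\mathrm{Hom}(W,W((x_1,\dots,x_r)))$ for some $k\in\mathbb{N}$; quasi compatible if $\prod_{i<j}p(x_i,x_j)a_1(x_1)\cdots a_r(x_r)\in\mathrm{Hom}(W,W((x_1,\dots,x_r)))$ for some nonzero $p\in\mathbb{C}[[x,y]]$; $\phi$-quasi compatible if this holds for some $p$ with $p(\phi(x,z),x)\ne0$. A subset is (quasi, $\phi$-quasi) compatible if every finite sequence in it is. *)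

theory Defs
  imports Main "HOL-Computational_Algebra.Formal_Laurent_Series"
begin

(* A complex vector space W is a type 'w with a scalar multiplication
   sc :: complex => 'w => 'w satisfying the locale vector_space sc.

   An element a(x) of E(W) = Hom(W, W((x))) is represented by its coefficient
   function  a :: 'w => int => 'w,  where  a w n  is the coefficient of x^n
   in a(x)w. *)

definition in_E :: "(complex \<Rightarrow> 'w::ab_group_add \<Rightarrow> 'w) \<Rightarrow> ('w \<Rightarrow> int \<Rightarrow> 'w) \<Rightarrow> bool" where
  "in_E sc a \<longleftrightarrow> (\<forall>n. Vector_Spaces.linear sc sc (\<lambda>w. a w n)) \<and> (\<forall>w. \<exists>N. \<forall>n<N. a w n = 0)"

definition E_set :: "(complex \<Rightarrow> 'w::ab_group_add \<Rightarrow> 'w) \<Rightarrow> ('w \<Rightarrow> int \<Rightarrow> 'w) set" where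
  "E_set sc = {a. in_E sc a}"

(* Formal series in the variables x_1,...,x_r with coefficients in W are
   represented by coefficient functions (nat => int) => 'w, where the exponent
   of x_(l+1) is  m l  (0-based indexing).
   vo_prod as w  is the series a_1(x_1)...a_r(x_r)w: its coefficient at m is
   a_1 (... (a_r w (m (r-1))) ...) (m 0), and 0 if m has nonzero exponents
   outside the first r variables. *)
definition vo_prod :: "('w::zero \<Rightarrow> int \<Rightarrow> 'w) list \<Rightarrow> 'w \<Rightarrow> (nat \<Rightarrow> int) \<Rightarrow> 'w" where
  "vo_prod as w m =
     (if \<forall>l\<ge>length as. m l = 0
      then foldr (\<lambda>(i, a) u. a u (m i)) (zip [0..<length as] as) w
      else 0)"

(* Multiplication of a series S by p(x_i, x_j), p in C[[x,y]] given by its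
   coefficients p a b (coefficient of x^a y^b).  The coefficient sum is finite
   for all series arising here (iterated Laurent series). *)
definition mult_ser ::
  "(complex \<Rightarrow> 'w::comm_monoid_add \<Rightarrow> 'w) \<Rightarrow> (nat \<Rightarrow> nat \<Rightarrow> complex) \<Rightarrow> nat \<Rightarrow> nat \<Rightarrow>
   ((nat \<Rightarrow> int) \<Rightarrow> 'w) \<Rightarrow> ((nat \<Rightarrow> int) \<Rightarrow> 'w)" where
  "mult_ser sc p i j S m =
     (\<Sum>(a, b) \<in> {(a, b). p a b \<noteq> 0 \<and> S (m(i := m i - int a, j := m j - int b)) \<noteq> 0}.
        sc (p a b) (S (m(i := m i - int a, j := m j - int b))))"

definition pairs :: "nat \<Rightarrow> (nat \<times> nat) list" where
  "pairs r = [(i, j). j \<leftarrow> [0..<r], i \<leftarrow> [0..<j]]"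

definition mult_all ::
  "(complex \<Rightarrow> 'w::comm_monoid_add \<Rightarrow> 'w) \<Rightarrow> (nat \<Rightarrow> nat \<Rightarrow> complex) \<Rightarrow> nat \<Rightarrow>
   ((nat \<Rightarrow> int) \<Rightarrow> 'w) \<Rightarrow> ((nat \<Rightarrow> int) \<Rightarrow> 'w)" where
  "mult_all sc p r S = foldr (\<lambda>(i, j) T. mult_ser sc p i j T) (pairs r) S"

definition laurent_r :: "nat \<Rightarrow> ((nat \<Rightarrow> int) \<Rightarrow> 'w::zero) \<Rightarrow> bool" where
  "laurent_r r S \<longleftrightarrow> (\<exists>N. \<forall>m. S m \<noteq> 0 \<longrightarrow> (\<forall>l<r. N \<le> m l) \<and> (\<forall>l\<ge>r. m l = 0))"

(* prod_{i<j} p(x_i,x_j) a_1(x_1)...a_r(x_r) in Hom(W, W((x_1,...,x_r))) *)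
definition poly_kills ::
  "(complex \<Rightarrow> 'w::comm_monoid_add \<Rightarrow> 'w) \<Rightarrow> (nat \<Rightarrow> nat \<Rightarrow> complex) \<Rightarrow> ('w \<Rightarrow> int \<Rightarrow> 'w) list \<Rightarrow> bool" where
  "poly_kills sc p as \<longleftrightarrow> (\<forall>w. laurent_r (length as) (mult_all sc p (length as) (vo_prod as w)))"

definition diffpow :: "nat \<Rightarrow> nat \<Rightarrow> nat \<Rightarrow> complex" where
  "diffpow k a b = (if a + b = k then (-1) ^ b * of_nat (k choose a) else 0)"

(* p(phi(x,z), x): coefficient of z^k x^n *)
definition phi_subst :: "(nat \<Rightarrow> nat \<Rightarrow> complex) \<Rightarrow> complex fls fps \<Rightarrow> nat \<Rightarrow> int \<Rightarrow> complex" where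
  "phi_subst p \<phi> k n =
     (\<Sum>(a, b) \<in> {(a, b). p a b \<noteq> 0 \<and> fls_nth ((\<phi> ^ a) $ k) (n - int b) \<noteq> 0}.
        p a b * fls_nth ((\<phi> ^ a) $ k) (n - int b))"

definition compatible_seq :: "(complex \<Rightarrow> 'w::comm_monoid_add \<Rightarrow> 'w) \<Rightarrow> ('w \<Rightarrow> int \<Rightarrow> 'w) list \<Rightarrow> bool" where
  "compatible_seq sc as \<longleftrightarrow> (\<exists>k. poly_kills sc (diffpow k) as)"

definition quasi_compatible_seq :: "(complex \<Rightarrow> 'w::comm_monoid_add \<Rightarrow> 'w) \<Rightarrow> ('w \<Rightarrow> int \<Rightarrow> 'w) list \<Rightarrow> bool" where
  "quasi_compatible_seq sc as \<longleftrightarrow> (\<exists>p. p \<noteq> (\<lambda>_ _. 0) \<and> poly_kills sc p as)"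

definition phi_quasi_compatible_seq ::
  "(complex \<Rightarrow> 'w::comm_monoid_add \<Rightarrow> 'w) \<Rightarrow> complex fls fps \<Rightarrow> ('w \<Rightarrow> int \<Rightarrow> 'w) list \<Rightarrow> bool" where
  "phi_quasi_compatible_seq sc \<phi> as \<longleftrightarrow> (\<exists>p. phi_subst p \<phi> \<noteq> (\<lambda>_ _. 0) \<and> poly_kills sc p as)"

definition compatible_set :: "(complex \<Rightarrow> 'w::comm_monoid_add \<Rightarrow> 'w) \<Rightarrow> ('w \<Rightarrow> int \<Rightarrow> 'w) set \<Rightarrow> bool" where
  "compatible_set sc A \<longleftrightarrow> (\<forall>as. set as \<subseteq> A \<longrightarrow> compatible_seq sc as)"

definition quasi_compatible_set :: "(complex \<Rightarrow> 'w::comm_monoid_add \<Rightarrow> 'w) \<Rightarrow> ('w \<Rightarrow> int \<Rightarrow> 'w) set \<Rightarrow> bool" where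
  "quasi_compatible_set sc A \<longleftrightarrow> (\<forall>as. set as \<subseteq> A \<longrightarrow> quasi_compatible_seq sc as)"

definition phi_quasi_compatible_set ::
  "(complex \<Rightarrow> 'w::comm_monoid_add \<Rightarrow> 'w) \<Rightarrow> complex fls fps \<Rightarrow> ('w \<Rightarrow> int \<Rightarrow> 'w) set \<Rightarrow> bool" where
  "phi_quasi_compatible_set sc \<phi> A \<longleftrightarrow> (\<forall>as. set as \<subseteq> A \<longrightarrow> phi_quasi_compatible_seq sc \<phi> as)"

(* phi(phi(x,x_2),x_0): coefficient of x_0^i x_2^j x^n, where
   phi(y,x_0) = sum_i phi_i(y) x_0^i and phi_i(y) = sum_m phi_i[m] y^m is
   evaluated at y = phi(x,x_2) (negative powers via the inverse in C((x))[[x_2]]). *)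
definition assoc_lhs :: "complex fls fps \<Rightarrow> nat \<Rightarrow> nat \<Rightarrow> int \<Rightarrow> complex" where
  "assoc_lhs \<phi> i j n =
     (\<Sum>m \<in> {m. fls_nth (\<phi> $ i) m \<noteq> 0 \<and> fls_nth ((\<phi> powi m) $ j) n \<noteq> 0}.
        fls_nth (\<phi> $ i) m * fls_nth ((\<phi> powi m) $ j) n)"

(* phi(x, x_0 + x_2): coefficient of x_0^i x_2^j x^n *)
definition assoc_rhs :: "complex fls fps \<Rightarrow> nat \<Rightarrow> nat \<Rightarrow> int \<Rightarrow> complex" where
  "assoc_rhs \<phi> i j n = of_nat ((i + j) choose i) * fls_nth (\<phi> $ (i + j)) n"

definition is_associate :: "complex fls fps \<Rightarrow> bool" where
  "is_associate \<phi> \<longleftrightarrow> \<phi> $ 0 = fls_X \<and> assoc_lhs \<phi> = assoc_rhs \<phi>"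

end

theory Submission
  imports Defs
begin

text \<open>Since \<open>(x - y)\<^sup>k \<noteq> 0\<close>, compatibility implies quasi compatibility, so it suffices
  to show that \<open>p(\<phi>(x,z), x) \<noteq> 0\<close> whenever \<open>p \<noteq> 0\<close>. Write \<open>\<phi> = x + E\<close>; as \<open>\<phi>(x,0) = x\<close>
  and \<open>\<phi> \<noteq> x\<close>, \<open>E\<close> has some \<open>z\<close>-order \<open>s \<ge> 1\<close>. Expanding \<open>\<phi>\<^sup>a = (x + E)\<^sup>a\<close> binomially, the
  coefficient of \<open>z\<^sup>i\<^sup>s\<close> in \<open>p(\<phi>, x)\<close> only involves \<open>E\<^sup>j\<close> for \<open>j \<le> i\<close>, each weighted by
  coefficients of \<open>p(x + y, y)\<close>. This substitution is invertible, so \<open>p(x + y, y) \<noteq> 0\<close>;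
  taking \<open>i\<close> minimal such that its \<open>x\<^sup>i\<close>-part is nonzero and comparing lowest \<open>x\<close>-degrees
  exhibits a nonzero coefficient.\<close>

lemma fps_power_nth_binomial:
  fixes F :: "'a::comm_semiring_1 fps"
  shows "((F + fps_const c) ^ a) $ k = (\<Sum>i\<le>a. of_nat (a choose i) * c ^ (a - i) * (F ^ i) $ k)"
proof -
  have "(F + fps_const c) ^ a = (\<Sum>i\<le>a. of_nat (a choose i) * F ^ i * fps_const (c ^ (a - i)))"
    by (simp add: binomial_ring)
  then show ?thesis
    by (simp add: fps_sum_nth fps_of_nat[symmetric] mult_ac)
qed

lemma fps_power_nth_binomial_truncated:
  fixes F :: "'a::comm_semiring_1 fps"
  assumes "\<And>i. i0 < i \<Longrightarrow> (F ^ i) $ k = 0"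
  shows "((F + fps_const c) ^ a) $ k = (\<Sum>i\<le>i0. of_nat (a choose i) * c ^ (a - i) * (F ^ i) $ k)"
proof -
  have "((F + fps_const c) ^ a) $ k = (\<Sum>i\<le>a + i0. of_nat (a choose i) * c ^ (a - i) * (F ^ i) $ k)"
    unfolding fps_power_nth_binomial
    by (rule sum.mono_neutral_left) (auto simp: binomial_eq_0 not_le[symmetric])
  also have "\<dots> = (\<Sum>i\<le>i0. of_nat (a choose i) * c ^ (a - i) * (F ^ i) $ k)"
    by (rule sum.mono_neutral_right) (auto simp: assms)
  finally show ?thesis .
qed

lemma fls_nth_of_nat_X_power_times:
  "fls_nth (of_nat c * fls_X ^ m * (f :: 'a::comm_ring_1 fls)) j = of_nat c * fls_nth f (j - int m)"
  by (simp only: mult.assoc fls_X_power_times_conv_shift(1)) (simp add: fls_of_nat)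

lemma sum_eq_single:
  assumes "finite A" "x \<in> A" "\<And>y. y \<in> A \<Longrightarrow> y \<noteq> x \<Longrightarrow> f y = 0"
  shows "sum f A = f x"
proof -
  have "sum f A = sum f {x}" by (rule sum.mono_neutral_right) (use assms in auto)
  then show ?thesis by simp
qed

text \<open>\<open>shear_coeff p i d\<close> is the coefficient of \<open>x\<^sup>i y\<^sup>d\<^sup>-\<^sup>i\<close> in \<open>p(x + y, y)\<close>.\<close>
definition shear_coeff :: "(nat \<Rightarrow> nat \<Rightarrow> 'a::semiring_1) \<Rightarrow> nat \<Rightarrow> nat \<Rightarrow> 'a" where
  "shear_coeff p i d = (\<Sum>a\<le>d. p a (d - a) * of_nat (a choose i))"

lemma shear_coeff_nonzero:
  fixes p :: "nat \<Rightarrow> nat \<Rightarrow> 'a::semiring_1"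
  assumes "p \<noteq> (\<lambda>_ _. 0)"
  shows "\<exists>i d. shear_coeff p i d \<noteq> 0"
proof -
  obtain a b where "p a b \<noteq> 0" using assms by (meson ext)
  define d where "d = a + b"
  define A where "A = {a'. a' \<le> d \<and> p a' (d - a') \<noteq> 0}"
  have "a \<in> A" using \<open>p a b \<noteq> 0\<close> by (simp add: A_def d_def)
  have "finite A" by (simp add: A_def)
  with \<open>a \<in> A\<close> have "Max A \<in> A" by (intro Max_in) auto
  have "shear_coeff p (Max A) d = p (Max A) (d - Max A) * of_nat (Max A choose Max A)"
    unfolding shear_coeff_def
  proof (rule sum_eq_single)
    fix a' assume "a' \<in> {..d}" "a' \<noteq> Max A"
    then consider "a' < Max A" | "a' \<notin> A"
      using Max_ge[OF \<open>finite A\<close>, of a'] by fastforce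
    then show "p a' (d - a') * of_nat (a' choose Max A) = 0"
      by cases (use \<open>a' \<in> {..d}\<close> in \<open>auto simp: A_def binomial_eq_0\<close>)
  qed (use \<open>Max A \<in> A\<close> in \<open>auto simp: A_def\<close>)
  also have "\<dots> \<noteq> 0" using \<open>Max A \<in> A\<close> by (simp add: A_def)
  finally show ?thesis by blast
qed

lemma phi_power_nth_expansion:
  fixes \<phi> :: "'a::comm_ring_1 fls fps"
  assumes "\<And>i. i0 < i \<Longrightarrow> ((\<phi> - fps_const fls_X) ^ i) $ k = 0"
  shows "fls_nth ((\<phi> ^ a) $ k) j =
    (\<Sum>i\<le>i0. of_nat (a choose i) * fls_nth (((\<phi> - fps_const fls_X) ^ i) $ k) (j - int (a - i)))"
proof -
  have "(\<phi> ^ a) $ k =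
      (\<Sum>i\<le>i0. of_nat (a choose i) * fls_X ^ (a - i) * ((\<phi> - fps_const fls_X) ^ i) $ k)"
    using fps_power_nth_binomial_truncated[OF assms, where c = fls_X and a = a]
    by (simp only: diff_add_cancel)
  then show ?thesis by (simp add: fls_nth_sum fls_nth_of_nat_X_power_times)
qed

lemma phi_power_nth_support_bounded:
  fixes \<phi> :: "'a::comm_ring_1 fls fps"
  assumes "\<And>i. i0 < i \<Longrightarrow> ((\<phi> - fps_const fls_X) ^ i) $ k = 0"
  shows "\<exists>M. \<forall>a b. fls_nth ((\<phi> ^ a) $ k) (n - int b) \<noteq> 0 \<longrightarrow> a + b \<le> M"
proof -
  define D where "D i = ((\<phi> - fps_const fls_X) ^ i) $ k" for i
  define L where "L = Min ((\<lambda>i. fls_subdegree (D i)) ` {..i0})"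
  have "a + b \<le> nat (n + int i0 - L)" if "fls_nth ((\<phi> ^ a) $ k) (n - int b) \<noteq> 0" for a b
  proof -
    have "(\<Sum>i\<le>i0. of_nat (a choose i) * fls_nth (D i) (n - int b - int (a - i))) \<noteq> 0"
      using that by (simp add: phi_power_nth_expansion[OF assms] D_def)
    then obtain i where i: "i \<le> i0" "of_nat (a choose i) * fls_nth (D i) (n - int b - int (a - i)) \<noteq> 0"
      by (auto elim: sum.not_neutral_contains_not_neutral)
    then have "i \<le> a" by (rule_tac ccontr) (simp add: binomial_eq_0)
    have "L \<le> fls_subdegree (D i)" unfolding L_def using \<open>i \<le> i0\<close> by (intro Min_le) auto
    also have "\<dots> \<le> n - int b - int (a - i)" using i(2) by (intro fls_subdegree_leI) auto
    finally show ?thesis using \<open>i \<le> a\<close> \<open>i \<le> i0\<close> by linarith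
  qed
  then show ?thesis by blast
qed

text \<open>The bound \<open>M\<close> makes the index set of the sum defining \<open>phi_subst\<close> finite; without it that
  sum would silently be \<open>0\<close>.\<close>
lemma phi_subst_eq_shear_sum:
  fixes p :: "nat \<Rightarrow> nat \<Rightarrow> complex"
  assumes trunc: "\<And>i. i0 < i \<Longrightarrow> ((\<phi> - fps_const fls_X) ^ i) $ k = 0"
    and bound: "\<And>a b. fls_nth ((\<phi> ^ a) $ k) (n - int b) \<noteq> 0 \<Longrightarrow> a + b \<le> M"
  shows "phi_subst p \<phi> k n =
    (\<Sum>i\<le>i0. \<Sum>d\<le>M. fls_nth (((\<phi> - fps_const fls_X) ^ i) $ k) (n - int d + int i) * shear_coeff p i d)"
proof -
  define D where "D i = ((\<phi> - fps_const fls_X) ^ i) $ k" for i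
  define c where "c a b = fls_nth ((\<phi> ^ a) $ k) (n - int b)" for a b
  define T where "T = (SIGMA d:{..M}. {..d})"
  have support: "{(a, b). p a b \<noteq> 0 \<and> c a b \<noteq> 0} \<subseteq> (\<lambda>(d, a). (a, d - a)) ` T"
  proof clarify
    fix a b assume "p a b \<noteq> 0" "c a b \<noteq> 0"
    then have "(a + b, a) \<in> T" using bound by (auto simp: T_def c_def)
    then show "(a, b) \<in> (\<lambda>(d, a). (a, d - a)) ` T" by force
  qed
  have expand: "p a (d - a) * c a (d - a) =
      (\<Sum>i\<le>i0. fls_nth (D i) (n - int d + int i) * (p a (d - a) * of_nat (a choose i)))"
    if "a \<le> d" for a d
  proof -
    have "p a (d - a) * c a (d - a) =
        (\<Sum>i\<le>i0. p a (d - a) * (of_nat (a choose i) * fls_nth (D i) (n - int (d - a) - int (a - i))))"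
      by (simp add: c_def D_def phi_power_nth_expansion[OF trunc] sum_distrib_left)
    also have "\<dots> = (\<Sum>i\<le>i0. fls_nth (D i) (n - int d + int i) * (p a (d - a) * of_nat (a choose i)))"
      using that by (intro sum.cong) (auto simp: binomial_eq_0 not_le[symmetric] of_nat_diff algebra_simps)
    finally show ?thesis .
  qed
  have "phi_subst p \<phi> k n = (\<Sum>(a, b)\<in>{(a, b). p a b \<noteq> 0 \<and> c a b \<noteq> 0}. p a b * c a b)"
    by (simp add: phi_subst_def c_def)
  also have "\<dots> = (\<Sum>(a, b)\<in>(\<lambda>(d, a). (a, d - a)) ` T. p a b * c a b)"
    using support by (intro sum.mono_neutral_left) (auto simp: T_def)
  also have "\<dots> = (\<Sum>(d, a)\<in>T. p a (d - a) * c a (d - a))"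
    by (subst sum.reindex) (auto simp: T_def inj_on_def intro!: sum.cong)
  also have "\<dots> = (\<Sum>(d, a)\<in>T. \<Sum>i\<le>i0. fls_nth (D i) (n - int d + int i) * (p a (d - a) * of_nat (a choose i)))"
    by (intro sum.cong) (auto simp: T_def expand)
  also have "\<dots> = (\<Sum>i\<le>i0. \<Sum>(d, a)\<in>T. fls_nth (D i) (n - int d + int i) * (p a (d - a) * of_nat (a choose i)))"
    by (subst sum.swap) (simp add: case_prod_beta')
  also have "\<dots> = (\<Sum>i\<le>i0. \<Sum>d\<le>M. fls_nth (D i) (n - int d + int i) * shear_coeff p i d)"
    by (simp add: T_def sum.Sigma[symmetric] shear_coeff_def sum_distrib_left)
  finally show ?thesis by (simp add: D_def)
qed

lemma phi_subst_nonzero: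
  fixes p :: "nat \<Rightarrow> nat \<Rightarrow> complex" and \<phi> :: "complex fls fps"
  assumes p: "p \<noteq> (\<lambda>_ _. 0)" and \<phi>0: "\<phi> $ 0 = fls_X" and \<phi>: "\<phi> \<noteq> fps_const fls_X"
  shows "phi_subst p \<phi> \<noteq> (\<lambda>_ _. 0)"
proof -
  define E where "E = \<phi> - fps_const fls_X"
  define s where "s = subdegree E"
  have "E \<noteq> 0" using \<phi> by (simp add: E_def)
  moreover have "E $ 0 = 0" using \<phi>0 by (simp add: E_def)
  ultimately have "s \<ge> 1" unfolding s_def by (metis less_one not_less nth_subdegree_nonzero)
  define i0 where "i0 = (LEAST i. \<exists>d. shear_coeff p i d \<noteq> 0)"
  define d0 where "d0 = (LEAST d. shear_coeff p i0 d \<noteq> 0)"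
  have "\<exists>d. shear_coeff p i0 d \<noteq> 0"
    unfolding i0_def by (rule LeastI_ex) (rule shear_coeff_nonzero[OF p])
  then have Q0: "shear_coeff p i0 d0 \<noteq> 0"
    unfolding d0_def by (rule LeastI_ex)
  have below_i0: "shear_coeff p i d = 0" if "i < i0" for i d
    using not_less_Least[OF that[unfolded i0_def]] by blast
  have below_d0: "shear_coeff p i0 d = 0" if "d < d0" for d
    using not_less_Least[OF that[unfolded d0_def]] by blast
  define K where "K = i0 * s"
  define D where "D i = (E ^ i) $ K" for i
  have trunc: "(E ^ i) $ K = 0" if "i0 < i" for i
    using that \<open>s \<ge> 1\<close> unfolding K_def s_def by (intro fps_pow_nth_below_subdegree) simp
  have "D i0 \<noteq> 0" using \<open>E \<noteq> 0\<close> by (simp add: D_def K_def s_def mult.commute)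
  define n where "n = fls_subdegree (D i0) + int d0 - int i0"
  obtain M where M: "\<And>a b. fls_nth ((\<phi> ^ a) $ K) (n - int b) \<noteq> 0 \<Longrightarrow> a + b \<le> M"
    using phi_power_nth_support_bounded[of i0 \<phi> K n] trunc unfolding E_def by blast
  have "phi_subst p \<phi> K n =
      (\<Sum>i\<le>i0. \<Sum>d\<le>max M d0. fls_nth (D i) (n - int d + int i) * shear_coeff p i d)"
    using trunc M unfolding D_def E_def
    by (intro phi_subst_eq_shear_sum) (auto intro: max.coboundedI1)
  also have "\<dots> = (\<Sum>d\<le>max M d0. fls_nth (D i0) (n - int d + int i0) * shear_coeff p i0 d)"
    by (rule sum_eq_single) (auto simp: below_i0)
  also have "\<dots> = fls_nth (D i0) (n - int d0 + int i0) * shear_coeff p i0 d0"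
  proof (rule sum_eq_single)
    fix d assume "d \<in> {..max M d0}" "d \<noteq> d0"
    then consider "d < d0" | "n - int d + int i0 < fls_subdegree (D i0)"
      by (fastforce simp: n_def)
    then show "fls_nth (D i0) (n - int d + int i0) * shear_coeff p i0 d = 0"
      by cases (simp_all add: below_d0)
  qed simp_all
  also have "\<dots> \<noteq> 0" using \<open>D i0 \<noteq> 0\<close> Q0 by (simp add: n_def)
  finally show ?thesis by metis
qed

lemma diffpow_nonzero: "diffpow k \<noteq> (\<lambda>_ _. 0)"
proof
  assume "diffpow k = (\<lambda>_ _. 0)"
  then have "diffpow k k 0 = 0" by simp
  then show False by (simp add: diffpow_def)
qed

theorem lemma4p4:
  fixes sc :: "complex \<Rightarrow> 'w::ab_group_add \<Rightarrow> 'w" and \<phi> :: "complex fls fps"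
  assumes "vector_space sc"
    and "is_associate \<phi>"
    and "\<phi> \<noteq> fps_const fls_X"
  shows "(\<forall>A. A \<subseteq> E_set sc \<and> compatible_set sc A \<longrightarrow> phi_quasi_compatible_set sc \<phi> A)
       \<and> (\<forall>A. A \<subseteq> E_set sc \<and> quasi_compatible_set sc A \<longrightarrow> phi_quasi_compatible_set sc \<phi> A)"
proof -
  have "\<phi> $ 0 = fls_X" using assms(2) by (simp add: is_associate_def)
  then have quasi: "quasi_compatible_seq sc as \<Longrightarrow> phi_quasi_compatible_seq sc \<phi> as" for as
    unfolding quasi_compatible_seq_def phi_quasi_compatible_seq_def
    using phi_subst_nonzero assms(3) by blast
  have compat: "compatible_seq sc as \<Longrightarrow> quasi_compatible_seq sc as" for as
    unfolding compatible_seq_def quasi_compatible_seq_def using diffpow_nonzero by blast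
  show ?thesis
    unfolding compatible_set_def quasi_compatible_set_def phi_quasi_compatible_set_def
    using quasi compat by blast
qed

end
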